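(* Let $t\geq 1$ and let $M$ be a subset of $\mathbb{F}_2^t\setminus\{0\}$ with $|M|\geq t+1$. Let $H_M$ be the $t\times |M|$ matrix whose columns are the elements of $M$ (written as column vectors, in some fixed order), and let $C_M=\{v\in\mathbb{F}_2^{|M|} : H_M v^{T}=0\}$ be the associated code, a binary linear code of length $|M|$, dimension $k$ and minimum distance $d$. (a) If $M$ is sum-free and $|M|\geq s_{\max}(t)$, then $d=4$ and $M$ is not Sidon. (b) If $M$ is sum-free and Sidon and $|M|\geq s_{\max}(t-1)$, then $k=|M|-t$ and $H_M$ is a parity check matrix of $C_M$ (i.e. has rank $t$). (c) If $M$ is sum-free and Sidon and $|M|\geq s_{\max}(t-1)+1$, then $d = 5$.
   Context: $\mathbb{F}_2^t$ is the $t$-dimensional vector space over $\mathbb{F}_2$. A subset $M\subseteq \mathbb{F}_2^t$ is Sidon if $m_1+m_2\neq m_3+m_4$ for all pairwise distinct $m_1,m_2,m_3,m_4\in M$; it is sum-free if $m_1+m_2\neq m_3$ for all $m_1,m_2,m_3\in M$ (not necessarily distinct). $s_{\max}(t)$ denotes the maximum size of a Sidon set in $\mathbb{F}_2^t$ (so $s_{\max}(0)=1$). The minimum distance of a binary linear code is the minimum Hamming weight of its nonzero codewords. *)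

theory Defs
  imports "HOL-Library.Z2" "Jordan_Normal_Form.Matrix_Kernel" "Jordan_Normal_Form.DL_Rank"
begin

text \<open>F_2^t is modelled as carrier_vec t of the type bit vec (field with two elements).\<close>

definition sidon :: "bit vec set \<Rightarrow> bool" where
  "sidon M \<longleftrightarrow> (\<forall>m1\<in>M. \<forall>m2\<in>M. \<forall>m3\<in>M. \<forall>m4\<in>M.
      distinct [m1, m2, m3, m4] \<longrightarrow> m1 + m2 \<noteq> m3 + m4)"

definition sum_free :: "bit vec set \<Rightarrow> bool" where
  "sum_free M \<longleftrightarrow> (\<forall>m1\<in>M. \<forall>m2\<in>M. \<forall>m3\<in>M. m1 + m2 \<noteq> m3)"

definition s_max :: "nat \<Rightarrow> nat" where
  "s_max t = Max (card ` {M. M \<subseteq> carrier_vec t \<and> sidon M})"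

definition col_mat :: "nat \<Rightarrow> bit vec list \<Rightarrow> bit mat" where
  "col_mat t ms = mat t (length ms) (\<lambda>(i, j). (ms ! j) $ i)"

definition hamming_weight :: "bit vec \<Rightarrow> nat" where
  "hamming_weight v = card {i. i < dim_vec v \<and> v $ i \<noteq> 0}"

definition min_dist :: "nat \<Rightarrow> bit vec set \<Rightarrow> nat" where
  "min_dist n C = Min (hamming_weight ` (C - {0\<^sub>v n}))"

end

theory Submission
  imports Defs
begin

(* A codeword of C_M is the indicator vector of a subset of M whose elements sum to zero, and its
   weight is the size of that subset, so d is the least size of a nonempty zero-sum subset of M.
   A nonzero sum-free M has no zero-sum subsets of size at most 3, and a Sidon set none of size 4.
   The key observation: if N has no nonempty zero-sum subset of size at most 4, then N together
   with 0 is a Sidon set, so |N| + 1 <= s_max. Applied to M this gives (a). For (b) and (c),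
   project F_2^t onto F_2^(t-1) along a vector w: a unit vector outside the span of M, resp. an
   element m of M. Small subsets of M (resp. of M - {m}) cannot sum to 0 or to w -- in case (c)
   because a subset summing to m would extend by m to a zero-sum set of size 5 -- so the projection
   is injective on them and their image again has no small zero sums, contradicting the bound
   s_max(t-1). *)

declare add_bit_eq_xor [simp del] mult_bit_eq_and [simp del]

lemma finite_UNIV_bit: "finite (UNIV :: bit set)"
proof -
  have "(UNIV :: bit set) = {0, 1}" by (auto intro: bit.exhaust)
  then show ?thesis by (metis finite.emptyI finite.insertI)
qed

lemma finite_carrier_vec:
  assumes "finite (UNIV :: 'a set)"
  shows "finite (carrier_vec n :: 'a vec set)"
proof (rule finite_subset)
  show "carrier_vec n \<subseteq> vec_of_list ` {xs. set xs \<subseteq> (UNIV :: 'a set) \<and> length xs = n}"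
    by (auto intro!: image_eqI[where x = "list_of_vec _"] simp: vec_list)
  show "finite (vec_of_list ` {xs. set xs \<subseteq> (UNIV :: 'a set) \<and> length xs = n})"
    using finite_lists_length_eq[OF assms] by (rule finite_imageI)
qed

lemma card_le_s_max:
  assumes "N \<subseteq> carrier_vec t" and "sidon N"
  shows "card N \<le> s_max t"
proof -
  have "finite {M. M \<subseteq> carrier_vec t \<and> sidon M}"
    by (rule finite_subset[of _ "Pow (carrier_vec t)"])
      (auto simp: finite_carrier_vec finite_UNIV_bit)
  then show ?thesis
    unfolding s_max_def using assms by (intro Max_ge) auto
qed

lemma bit_add_eq_0_iff: "(a::bit) + b = 0 \<longleftrightarrow> a = b"
  by (cases a; cases b) simp_all

lemma bit_vec_add_eq_0_iff:
  assumes "x \<in> carrier_vec n" and "y \<in> carrier_vec n"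
  shows "x + y = 0\<^sub>v n \<longleftrightarrow> x = (y :: bit vec)"
  using assms by (auto simp: vec_eq_iff bit_add_eq_0_iff)

definition vsum :: "nat \<Rightarrow> 'a::comm_monoid_add vec set \<Rightarrow> 'a vec" where
  "vsum n S = vec n (\<lambda>i. \<Sum>x\<in>S. x $ i)"

lemma vsum_carrier [simp]: "vsum n S \<in> carrier_vec n"
  and dim_vsum [simp]: "dim_vec (vsum n S) = n"
  and index_vsum [simp]: "i < n \<Longrightarrow> vsum n S $ i = (\<Sum>x\<in>S. x $ i)"
  by (simp_all add: vsum_def)

lemma vsum_empty [simp]: "vsum n {} = 0\<^sub>v n"
  by (simp add: vsum_def zero_vec_def)

lemma vsum_insert:
  assumes "finite S" and "x \<notin> S" and "x \<in> carrier_vec n"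
  shows "vsum n (insert x S) = x + vsum n S"
  using assms by (auto simp: vec_eq_iff)

lemma vsum_singleton [simp]: "x \<in> carrier_vec n \<Longrightarrow> vsum n {x} = x"
  by (simp add: vsum_insert)

lemma vsum_Diff_zero: "vsum n (P - {0\<^sub>v n}) = vsum n P"
proof (cases "finite P")
  case True
  then show ?thesis by (auto simp: vec_eq_iff intro: sum.mono_neutral_left)
qed (simp add: vsum_def)

definition zero_sum_free_upto :: "nat \<Rightarrow> nat \<Rightarrow> 'a::comm_monoid_add vec set \<Rightarrow> bool" where
  "zero_sum_free_upto k n N \<longleftrightarrow>
     (\<forall>Q\<subseteq>N. finite Q \<longrightarrow> Q \<noteq> {} \<longrightarrow> card Q \<le> k \<longrightarrow> vsum n Q \<noteq> 0\<^sub>v n)"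

lemma zero_sum_free_uptoD:
  "zero_sum_free_upto k n N \<Longrightarrow> Q \<subseteq> N \<Longrightarrow> finite Q \<Longrightarrow> Q \<noteq> {} \<Longrightarrow> card Q \<le> k
    \<Longrightarrow> vsum n Q \<noteq> 0\<^sub>v n"
  unfolding zero_sum_free_upto_def by blast

lemma vsum_4_eq_0_iff:
  assumes "{a, b, c, e} \<subseteq> carrier_vec n" and "distinct [a, b, c, e]"
  shows "vsum n {a, b, c, e} = 0\<^sub>v n \<longleftrightarrow> a + b = (c + e :: bit vec)"
proof -
  have "vsum n {a, b, c, e} = a + (b + (c + e))"
    using assms by (simp add: vsum_insert)
  also have "\<dots> = (a + b) + (c + e)"
    using assms by (intro assoc_add_vec[symmetric]) auto
  finally show ?thesis
    using assms by (simp add: bit_vec_add_eq_0_iff)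
qed

lemma card_eq_4_iff: "card P = 4 \<longleftrightarrow> (\<exists>a b c e. P = {a, b, c, e} \<and> distinct [a, b, c, e])"
proof
  assume "card P = 4"
  then have "card P = Suc 3" by simp
  then obtain a B where "P = insert a B" "a \<notin> B" "card B = 3"
    unfolding card_Suc_eq by blast
  then show "\<exists>a b c e. P = {a, b, c, e} \<and> distinct [a, b, c, e]"
    by (auto simp: card_3_iff)
qed auto

lemma sidon_iff_no_zero_sum_4:
  assumes "N \<subseteq> carrier_vec n"
  shows "sidon N \<longleftrightarrow> (\<forall>P\<subseteq>N. card P = 4 \<longrightarrow> vsum n P \<noteq> 0\<^sub>v n)"
proof -
  have sum_iff: "vsum n {a, b, c, e} = 0\<^sub>v n \<longleftrightarrow> a + b = c + e"
    if "{a, b, c, e} \<subseteq> N" "distinct [a, b, c, e]" for a b c e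
    using vsum_4_eq_0_iff[OF _ that(2)] that(1) assms by blast
  show ?thesis
  proof
    assume "sidon N"
    then show "\<forall>P\<subseteq>N. card P = 4 \<longrightarrow> vsum n P \<noteq> 0\<^sub>v n"
      unfolding sidon_def card_eq_4_iff using sum_iff by auto
  next
    assume no_zero_sum: "\<forall>P\<subseteq>N. card P = 4 \<longrightarrow> vsum n P \<noteq> 0\<^sub>v n"
    show "sidon N"
      unfolding sidon_def
    proof (intro ballI impI)
      fix a b c e assume "a \<in> N" "b \<in> N" "c \<in> N" "e \<in> N" and abce: "distinct [a, b, c, e]"
      then have sub: "{a, b, c, e} \<subseteq> N" by simp
      moreover have "card {a, b, c, e} = 4" using abce by simp
      ultimately have "vsum n {a, b, c, e} \<noteq> 0\<^sub>v n" using no_zero_sum by blast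
      then show "a + b \<noteq> c + e" using sum_iff[OF sub abce] by blast
    qed
  qed
qed

lemma zero_sum_free_upto_3_if_sum_free:
  assumes "M \<subseteq> carrier_vec n - {0\<^sub>v n}" and "sum_free M"
  shows "zero_sum_free_upto 3 n M"
  unfolding zero_sum_free_upto_def
proof (intro allI impI)
  fix Q assume Q: "Q \<subseteq> M" "finite Q" "Q \<noteq> {}" "card Q \<le> 3"
  have carrier: "Q \<subseteq> carrier_vec n" using Q(1) assms(1) by auto
  have "card Q \<noteq> 0" using Q(2,3) by simp
  then consider "card Q = 1" | "card Q = 2" | "card Q = 3" using Q(4) by linarith
  then show "vsum n Q \<noteq> 0\<^sub>v n"
  proof cases
    case 1
    then obtain a where "Q = {a}" by (auto simp: card_1_singleton_iff)
    then show ?thesis using Q(1) carrier assms(1) by auto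
  next
    case 2
    then obtain a b where ab: "Q = {a, b}" "a \<noteq> b" by (auto simp: card_2_iff)
    then have "vsum n Q = a + b" using carrier by (simp add: vsum_insert)
    then show ?thesis using ab carrier by (simp add: bit_vec_add_eq_0_iff)
  next
    case 3
    then obtain a b c where abc: "Q = {a, b, c}" "a \<noteq> b" "a \<noteq> c" "b \<noteq> c"
      by (auto simp: card_3_iff)
    then have "vsum n Q = a + (b + c)" using carrier by (simp add: vsum_insert)
    also have "\<dots> = (a + b) + c" using abc carrier by (intro assoc_add_vec[symmetric]) auto
    finally have "vsum n Q = 0\<^sub>v n \<longleftrightarrow> a + b = c"
      using abc carrier by (simp add: bit_vec_add_eq_0_iff)
    moreover have "a + b \<noteq> c" using assms(2) abc Q(1) unfolding sum_free_def by auto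
    ultimately show ?thesis by blast
  qed
qed

lemma zero_sum_free_upto_4_if_sidon:
  assumes "M \<subseteq> carrier_vec n - {0\<^sub>v n}" and "sum_free M" and "sidon M"
  shows "zero_sum_free_upto 4 n M"
  unfolding zero_sum_free_upto_def
proof (intro allI impI)
  fix Q assume Q: "Q \<subseteq> M" "finite Q" "Q \<noteq> {}" "card Q \<le> 4"
  show "vsum n Q \<noteq> 0\<^sub>v n"
  proof (cases "card Q = 4")
    case True
    then show ?thesis using assms(1,3) Q(1) sidon_iff_no_zero_sum_4[of M n] by auto
  next
    case False
    then show ?thesis
      using zero_sum_free_uptoD[OF zero_sum_free_upto_3_if_sum_free[OF assms(1,2)]] Q by simp
  qed
qed

lemma sidon_insert_zero:
  fixes N :: "bit vec set"
  assumes "N \<subseteq> carrier_vec n" and "zero_sum_free_upto 4 n N"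
  shows "sidon (insert (0\<^sub>v n) N)"
proof -
  have carrier: "insert (0\<^sub>v n) N \<subseteq> carrier_vec n" using assms(1) by simp
  show ?thesis
    unfolding sidon_iff_no_zero_sum_4[OF carrier]
  proof (intro allI impI)
    fix P assume P: "P \<subseteq> insert (0\<^sub>v n) N" "card P = 4"
    then have "finite P" by (simp add: card_ge_0_finite)
    then have "P - {0\<^sub>v n} \<noteq> {}" "card (P - {0\<^sub>v n}) \<le> 4"
      using P(2) by (auto simp: card_Diff_singleton_if dest!: subset_singletonD)
    moreover have "P - {0\<^sub>v n} \<subseteq> N" using P(1) by auto
    ultimately have "vsum n (P - {0\<^sub>v n}) \<noteq> 0\<^sub>v n"
      using zero_sum_free_uptoD[OF assms(2)] \<open>finite P\<close> by simp
    then show "vsum n P \<noteq> 0\<^sub>v n" by (simp add: vsum_Diff_zero)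
  qed
qed

lemma card_le_s_max_if_zero_sum_free:
  fixes N :: "bit vec set"
  assumes "finite N" and "N \<subseteq> carrier_vec n" and "zero_sum_free_upto 4 n N"
  shows "card N + 1 \<le> s_max n"
proof -
  have "0\<^sub>v n \<notin> N" using zero_sum_free_uptoD[OF assms(3), of "{0\<^sub>v n}"] by auto
  then have "card N + 1 = card (insert (0\<^sub>v n) N)" using assms(1) by simp
  also have "\<dots> \<le> s_max n"
    using assms(2) sidon_insert_zero[OF assms(2,3)] by (intro card_le_s_max) auto
  finally show ?thesis .
qed

definition drop_coord :: "nat \<Rightarrow> 'a vec \<Rightarrow> 'a vec" where
  "drop_coord i x = vec (dim_vec x - 1) (\<lambda>k. x $ (if k < i then k else Suc k))"

lemma drop_coord_eq_0_iff:
  assumes "x \<in> carrier_vec n" and "i < n"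
  shows "drop_coord i x = 0\<^sub>v (n - 1) \<longleftrightarrow> (\<forall>j<n. j \<noteq> i \<longrightarrow> x $ j = 0)"
proof -
  have "(\<forall>k<n - 1. x $ (if k < i then k else Suc k) = 0) \<longleftrightarrow> (\<forall>j<n. j \<noteq> i \<longrightarrow> x $ j = 0)"
  proof
    assume zero: "\<forall>k<n - 1. x $ (if k < i then k else Suc k) = 0"
    show "\<forall>j<n. j \<noteq> i \<longrightarrow> x $ j = 0"
    proof (intro allI impI)
      fix j assume "j < n" "j \<noteq> i"
      show "x $ j = 0"
      proof (cases "j < i")
        case True
        then show ?thesis using zero[rule_format, of j] assms(2) by simp
      next
        case False
        then have "j - 1 < n - 1" "\<not> j - 1 < i" "Suc (j - 1) = j"
          using \<open>j < n\<close> \<open>j \<noteq> i\<close> by auto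
        then show ?thesis using zero[rule_format, of "j - 1"] by simp
      qed
    qed
  qed auto
  then show ?thesis
    using assms by (auto simp: drop_coord_def vec_eq_iff)
qed

definition proj_along :: "nat \<Rightarrow> 'a::comm_ring_1 vec \<Rightarrow> 'a vec \<Rightarrow> 'a vec" where
  "proj_along i w x = drop_coord i (x - x $ i \<cdot>\<^sub>v w)"

lemma dim_proj_along [simp]: "dim_vec (proj_along i w x) = dim_vec w - 1"
  by (simp add: proj_along_def drop_coord_def)

lemma proj_along_carrier: "w \<in> carrier_vec n \<Longrightarrow> proj_along i w x \<in> carrier_vec (n - 1)"
  by (metis carrier_vecD carrier_vecI dim_proj_along)

lemma index_proj_along:
  fixes i k :: nat
  assumes "k < dim_vec w - 1"
  defines "j \<equiv> if k < i then k else Suc k"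
  shows "proj_along i w x $ k = x $ j - x $ i * w $ j"
  using assms by (simp add: proj_along_def drop_coord_def)

lemma proj_along_add:
  assumes "x \<in> carrier_vec n" and "y \<in> carrier_vec n" and "w \<in> carrier_vec n" and "i < n"
  shows "proj_along i w (x + y) = proj_along i w x + proj_along i w y"
  using assms by (auto simp: vec_eq_iff index_proj_along algebra_simps)

lemma proj_along_eq_0D:
  assumes "i < n" and "x \<in> carrier_vec n" and "w \<in> carrier_vec n" and "w $ i = 1"
    and "proj_along i w x = 0\<^sub>v (n - 1)"
  shows "x = x $ i \<cdot>\<^sub>v w"
proof (rule eq_vecI)
  have "x - x $ i \<cdot>\<^sub>v w \<in> carrier_vec n" using assms(2,3) by simp
  then have zero: "\<forall>j<n. j \<noteq> i \<longrightarrow> (x - x $ i \<cdot>\<^sub>v w) $ j = 0"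
    using drop_coord_eq_0_iff[OF _ assms(1)] assms(5) unfolding proj_along_def by blast
  fix j assume "j < dim_vec (x $ i \<cdot>\<^sub>v w)"
  then have j: "j < n" using assms(3) by simp
  show "x $ j = (x $ i \<cdot>\<^sub>v w) $ j"
  proof (cases "j = i")
    case True
    then show ?thesis using j assms(3,4) by simp
  next
    case False
    then have "(x - x $ i \<cdot>\<^sub>v w) $ j = 0" using zero j by blast
    then show ?thesis using j assms(3) by simp
  qed
qed (use assms(2,3) in simp)

lemma vsum_image_proj_along:
  assumes "inj_on (proj_along i w) Q" and "w \<in> carrier_vec n" and "i < n"
  shows "vsum (n - 1) (proj_along i w ` Q) = proj_along i w (vsum n Q)"
proof (rule eq_vecI)
  fix k assume "k < dim_vec (proj_along i w (vsum n Q))"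
  then have k: "k < n - 1" using assms(2) by simp
  define j where "j = (if k < i then k else Suc k)"
  have j: "j < n" using k unfolding j_def by auto
  have "vsum (n - 1) (proj_along i w ` Q) $ k = (\<Sum>x\<in>Q. proj_along i w x $ k)"
    using k assms(1) by (simp add: sum.reindex)
  also have "\<dots> = (\<Sum>x\<in>Q. x $ j - x $ i * w $ j)"
    using k assms(2) by (simp add: index_proj_along j_def)
  also have "\<dots> = proj_along i w (vsum n Q) $ k"
    using k j assms(2,3) by (simp add: index_proj_along j_def[symmetric] sum_subtractf sum_distrib_right)
  finally show "vsum (n - 1) (proj_along i w ` Q) $ k = proj_along i w (vsum n Q) $ k" .
qed (use assms(2) in simp)

lemma card_le_s_max_pred_if_zero_sums_avoid:
  fixes N :: "bit vec set"
  assumes "i < t" and "w \<in> carrier_vec t" and "w $ i = 1" and "finite N" and "N \<subseteq> carrier_vec t"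
    and avoid: "\<And>Q. Q \<subseteq> N \<Longrightarrow> Q \<noteq> {} \<Longrightarrow> card Q \<le> 4 \<Longrightarrow> vsum t Q \<notin> {0\<^sub>v t, w}"
  shows "card N + 1 \<le> s_max (t - 1)"
proof -
  let ?\<pi> = "proj_along i w"
  have kernel: "v \<in> {0\<^sub>v t, w}" if "v \<in> carrier_vec t" "?\<pi> v = 0\<^sub>v (t - 1)" for v
  proof -
    have "v = v $ i \<cdot>\<^sub>v w" using proj_along_eq_0D[OF assms(1) that(1) assms(2,3) that(2)] .
    then show ?thesis using assms(2) by (cases "v $ i") (auto simp: vec_eq_iff)
  qed
  have inj: "inj_on ?\<pi> N"
  proof (rule inj_onI, rule ccontr)
    fix a b assume ab: "a \<in> N" "b \<in> N" "?\<pi> a = ?\<pi> b" "a \<noteq> b"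
    have carrier: "a \<in> carrier_vec t" "b \<in> carrier_vec t" using ab(1,2) assms(5) by auto
    have "?\<pi> (a + b) = ?\<pi> a + ?\<pi> b" using proj_along_add[OF carrier assms(2,1)] .
    also have "\<dots> = 0\<^sub>v (t - 1)"
      using ab(3) proj_along_carrier[OF assms(2)] by (simp add: bit_vec_add_eq_0_iff)
    finally have "vsum t {a, b} \<in> {0\<^sub>v t, w}"
      using kernel carrier ab(4) by (simp add: vsum_insert)
    then show False using avoid[of "{a, b}"] ab by auto
  qed
  have "zero_sum_free_upto 4 (t - 1) (?\<pi> ` N)"
    unfolding zero_sum_free_upto_def
  proof (intro allI impI)
    fix P assume P: "P \<subseteq> ?\<pi> ` N" "finite P" "P \<noteq> {}" "card P \<le> 4"
    then obtain Q where Q: "Q \<subseteq> N" "P = ?\<pi> ` Q" by (auto simp: subset_image_iff)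
    have inj_Q: "inj_on ?\<pi> Q" using inj Q(1) by (rule inj_on_subset)
    have "vsum t Q \<notin> {0\<^sub>v t, w}"
      using avoid Q P(3,4) card_image[OF inj_Q] by auto
    moreover have "vsum (t - 1) P = ?\<pi> (vsum t Q)"
      using vsum_image_proj_along[OF inj_Q assms(2,1)] Q(2) by simp
    ultimately show "vsum (t - 1) P \<noteq> 0\<^sub>v (t - 1)" using kernel[OF vsum_carrier] by auto
  qed
  then have "card (?\<pi> ` N) + 1 \<le> s_max (t - 1)"
    using assms(2,4) proj_along_carrier by (intro card_le_s_max_if_zero_sum_free) auto
  then show ?thesis using card_image[OF inj] by simp
qed

lemma (in vec_space) vsum_in_span:
  assumes "Q \<subseteq> M" and "finite Q" and "M \<subseteq> carrier_vec n"
  shows "vsum n Q \<in> span M"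
proof -
  have carrier: "Q \<subseteq> carrier_vec n" using assms(1,3) by blast
  have "vsum n Q = lincomb (\<lambda>_. 1) Q"
    using lincomb_dim[OF assms(2) carrier] by (auto simp: vec_eq_iff lincomb_index[OF _ carrier])
  then show ?thesis unfolding span_def using assms(1,2) by blast
qed

lemma (in vec_space) rank_eq_if_unit_vecs_in_span:
  assumes "A \<in> carrier_mat n nc" and "\<And>i. i < n \<Longrightarrow> unit_vec n i \<in> span (set (cols A))"
  shows "rank A = n"
proof -
  have cols: "set (cols A) \<subseteq> carrier_vec n" using assms(1) cols_dim by blast
  have span: "span (set (cols A)) = carrier_vec n"
  proof
    show "span (set (cols A)) \<subseteq> carrier_vec n" using span_is_subset2[OF cols] by simp
    have "carrier_vec n = span (set (unit_vecs n))" using span_unit_vecs_is_carrier by simp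
    also have "\<dots> \<subseteq> span (set (cols A))"
    proof (rule span_is_subset)
      show "set (unit_vecs n) \<subseteq> span (set (cols A))" using assms(2) by (auto simp: unit_vecs_def)
      show "submodule class_ring (span (set (cols A))) V" using cols by (rule span_is_submodule)
    qed
    finally show "carrier_vec n \<subseteq> span (set (cols A))" .
  qed
  have V: "V\<lparr>carrier := carrier_vec n\<rparr> = V" by (simp add: module_vec_def)
  show ?thesis unfolding rank_def span V by (rule dim_is_n)
qed

lemma kernel_dim_add_rank:
  fixes A :: "'a::field mat"
  assumes A: "A \<in> carrier_mat nr nc"
  shows "kernel_dim A + vec_space.rank nr A = nc"
proof -
  interpret K: kernel nr nc A by unfold_locales (rule A)
  interpret W: vec_space "TYPE('a)" nr .
  interpret L: linear_map class_ring "module_vec TYPE('a) nc" "module_vec TYPE('a) nr" "\<lambda>v. A *\<^sub>v v"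
    apply (intro_locales)
    apply (unfold mod_hom_axioms_def LinearCombinations.module_hom_def)
    using A by (auto simp: module_vec_simps mult_add_distrib_mat_vec[OF A] mult_mat_vec[OF A])
  have ker: "L.kerT = mat_kernel A"
    unfolding L.ker_def mat_kernel_def using A by (auto simp: module_vec_simps)
  have im: "L.imT = W.span (set (cols A))"
    unfolding L.im_def W.col_space_eq[OF A, unfolded W.col_space_def] using A by (auto simp: module_vec_simps)
  have "vectorspace.dim class_ring (W.vs L.imT) + vectorspace.dim class_ring (K.NC.vs L.kerT) = K.NC.dim"
    by (rule L.rank_nullity) simp
  then show ?thesis unfolding ker im K.NC.dim_is_n W.rank_def K.kernel_dim by simp
qed

lemma col_mat_carrier: "col_mat t ms \<in> carrier_mat t (length ms)"
  by (simp add: col_mat_def)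

lemma cols_col_mat:
  assumes "set ms \<subseteq> carrier_vec t"
  shows "cols (col_mat t ms) = ms"
proof (rule nth_equalityI)
  fix j assume "j < length (cols (col_mat t ms))"
  then have "j < length ms" by (simp add: col_mat_def)
  then show "cols (col_mat t ms) ! j = ms ! j"
    using assms nth_mem by (fastforce simp: col_mat_def col_def intro!: eq_vecI)
qed (simp add: col_mat_def)

lemma col_mat_mult_vec:
  assumes "v \<in> carrier_vec (length ms)" and "distinct ms"
  shows "col_mat t ms *\<^sub>v v = vsum t (nth ms ` {j. j < length ms \<and> v $ j = 1})"
proof (rule eq_vecI)
  let ?S = "{j. j < length ms \<and> v $ j = 1}"
  fix i assume "i < dim_vec (vsum t (nth ms ` ?S))"
  then have i: "i < t" by simp
  have "(col_mat t ms *\<^sub>v v) $ i = (\<Sum>j<length ms. (ms ! j) $ i * v $ j)"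
    using assms(1) i by (simp add: col_mat_def mult_mat_vec_def scalar_prod_def lessThan_atLeast0)
  also have "\<dots> = (\<Sum>j<length ms. if v $ j = 1 then (ms ! j) $ i else 0)"
    by (rule sum.cong) auto
  also have "\<dots> = (\<Sum>j\<in>?S. (ms ! j) $ i)"
    by (simp add: sum.If_cases Collect_conj_eq lessThan_def Int_commute)
  also have "\<dots> = (\<Sum>x\<in>nth ms ` ?S. x $ i)"
    using assms(2) by (simp add: sum.reindex inj_on_nth)
  finally show "(col_mat t ms *\<^sub>v v) $ i = vsum t (nth ms ` ?S) $ i"
    using i by simp
qed (simp add: col_mat_def)

lemma min_dist_col_mat:
  assumes "distinct ms"
  shows "min_dist (length ms) (mat_kernel (col_mat t ms))
    = Min (card ` {T. T \<subseteq> set ms \<and> T \<noteq> {} \<and> vsum t T = 0\<^sub>v t})"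
proof -
  let ?n = "length ms"
  let ?K = "mat_kernel (col_mat t ms) - {0\<^sub>v ?n}"
  let ?supp = "\<lambda>v :: bit vec. nth ms ` {j. j < ?n \<and> v $ j = 1}"
  have kernel: "v \<in> mat_kernel (col_mat t ms) \<longleftrightarrow> v \<in> carrier_vec ?n \<and> vsum t (?supp v) = 0\<^sub>v t"
    for v
    using mat_kernel[OF col_mat_carrier] col_mat_mult_vec[OF _ assms] by auto
  have supp_empty: "?supp v = {} \<longleftrightarrow> v = 0\<^sub>v ?n" if "v \<in> carrier_vec ?n" for v
    using that by (auto simp: vec_eq_iff)
  have "?supp ` ?K = {T. T \<subseteq> set ms \<and> T \<noteq> {} \<and> vsum t T = 0\<^sub>v t}"
  proof (intro equalityI subsetI)
    fix T assume "T \<in> ?supp ` ?K"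
    then obtain v where v: "v \<in> ?K" "T = ?supp v" by blast
    then show "T \<in> {T. T \<subseteq> set ms \<and> T \<noteq> {} \<and> vsum t T = 0\<^sub>v t}"
      using kernel supp_empty by auto
  next
    fix T assume T: "T \<in> {T. T \<subseteq> set ms \<and> T \<noteq> {} \<and> vsum t T = 0\<^sub>v t}"
    define v where "v = vec ?n (\<lambda>j. if ms ! j \<in> T then 1 else 0 :: bit)"
    have "{j. j < ?n \<and> v $ j = 1} = {j. j < ?n \<and> ms ! j \<in> T}"
      by (auto simp: v_def split: if_splits)
    then have "?supp v = T"
      using T by (force simp: in_set_conv_nth)
    moreover have "v \<in> carrier_vec ?n" by (simp add: v_def)
    ultimately show "T \<in> ?supp ` ?K"
      using T kernel supp_empty by (intro image_eqI[of _ _ v]) auto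
  qed
  moreover have "hamming_weight ` ?K = card ` ?supp ` ?K"
    unfolding image_image
  proof (rule image_cong)
    fix v assume "v \<in> ?K"
    then have "v \<in> carrier_vec ?n" using kernel by blast
    then show "hamming_weight v = card (?supp v)"
      using assms by (simp add: hamming_weight_def card_image inj_on_nth)
  qed simp
  ultimately show ?thesis
    unfolding min_dist_def by simp
qed

lemma min_dist_col_mat_eqI:
  assumes "distinct ms" and "T \<subseteq> set ms" and "T \<noteq> {}" and "vsum t T = 0\<^sub>v t"
    and "zero_sum_free_upto (card T - 1) t (set ms)"
  shows "min_dist (length ms) (mat_kernel (col_mat t ms)) = card T"
  unfolding min_dist_col_mat[OF assms(1)]
proof (rule Min_eqI)
  show "finite (card ` {T. T \<subseteq> set ms \<and> T \<noteq> {} \<and> vsum t T = 0\<^sub>v t})"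
    by (rule finite_imageI, rule finite_subset[of _ "Pow (set ms)"]) auto
  show "card T \<in> card ` {T. T \<subseteq> set ms \<and> T \<noteq> {} \<and> vsum t T = 0\<^sub>v t}"
    using assms(2-4) by blast
next
  fix k assume "k \<in> card ` {T. T \<subseteq> set ms \<and> T \<noteq> {} \<and> vsum t T = 0\<^sub>v t}"
  then obtain T' where T': "T' \<subseteq> set ms" "T' \<noteq> {}" "vsum t T' = 0\<^sub>v t" "k = card T'" by blast
  have "finite T'" using T'(1) finite_subset by blast
  show "card T \<le> k"
  proof (rule ccontr)
    assume "\<not> card T \<le> k"
    then have "card T' \<le> card T - 1" using T'(4) by linarith
    then show False using zero_sum_free_uptoD[OF assms(5) T'(1) \<open>finite T'\<close> T'(2)] T'(3) by blast
  qed
qed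

lemma card_le_s_max_pred_if_zero_sum_free_5:
  fixes M :: "bit vec set"
  assumes "finite M" and "M \<subseteq> carrier_vec t - {0\<^sub>v t}" and "M \<noteq> {}"
    and "zero_sum_free_upto 5 t M"
  shows "card M \<le> s_max (t - 1)"
proof -
  obtain m where m: "m \<in> M" using assms(3) by blast
  then have m_carrier: "m \<in> carrier_vec t" and "m \<noteq> 0\<^sub>v t" using assms(2) by auto
  then obtain i where i: "i < t" "m $ i = 1" by (auto simp: vec_eq_iff)
  have "vsum t Q \<notin> {0\<^sub>v t, m}" if Q: "Q \<subseteq> M - {m}" "Q \<noteq> {}" "card Q \<le> 4" for Q
  proof -
    have "finite Q" using Q(1) assms(1) finite_subset by blast
    have "vsum t Q \<noteq> 0\<^sub>v t"
      using zero_sum_free_uptoD[OF assms(4), of Q] Q \<open>finite Q\<close> by auto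
    moreover have "vsum t Q \<noteq> m"
    proof
      assume "vsum t Q = m"
      moreover have "m \<notin> Q" using Q(1) by blast
      ultimately have "vsum t (insert m Q) = 0\<^sub>v t"
        using \<open>finite Q\<close> m_carrier by (simp add: vsum_insert bit_vec_add_eq_0_iff)
      moreover have "card (insert m Q) \<le> 5" using Q(3) \<open>finite Q\<close> by (simp add: card_insert_if)
      ultimately show False
        using zero_sum_free_uptoD[OF assms(4), of "insert m Q"] Q(1) m \<open>finite Q\<close> by blast
    qed
    ultimately show ?thesis by blast
  qed
  then have "card (M - {m}) + 1 \<le> s_max (t - 1)"
    using assms(1,2) m_carrier i by (intro card_le_s_max_pred_if_zero_sums_avoid) auto
  then show ?thesis using m assms(1) by (simp add: card_Diff_singleton)
qed

lemma min_dist_col_mat_eq_4: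
  assumes "M \<subseteq> carrier_vec t - {0\<^sub>v t}" and "sum_free M" and "s_max t \<le> card M"
    and "distinct ms" and "set ms = M"
  shows "min_dist (card M) (mat_kernel (col_mat t ms)) = 4 \<and> \<not> sidon M"
proof -
  have not_sidon: "\<not> sidon M"
  proof
    assume "sidon M"
    then have "card M + 1 \<le> s_max t"
      using assms(1,2,5) zero_sum_free_upto_4_if_sidon
      by (intro card_le_s_max_if_zero_sum_free) auto
    then show False using assms(3) by simp
  qed
  then obtain P where "P \<subseteq> M" "card P = 4" "vsum t P = 0\<^sub>v t"
    using assms(1) sidon_iff_no_zero_sum_4[of M t] by auto
  moreover from this have "P \<noteq> {}" by auto
  ultimately have "min_dist (length ms) (mat_kernel (col_mat t ms)) = 4"
    using min_dist_col_mat_eqI[of ms P t] zero_sum_free_upto_3_if_sum_free[OF assms(1,2)] assms(4,5)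
    by auto
  then show ?thesis
    using not_sidon assms(4,5) distinct_card by metis
qed

lemma rank_col_mat_if_sidon:
  assumes "M \<subseteq> carrier_vec t - {0\<^sub>v t}" and "sum_free M" and "sidon M"
    and "s_max (t - 1) \<le> card M" and "distinct ms" and "set ms = M"
  shows "kernel_dim (col_mat t ms) = card M - t \<and> vec_space.rank t (col_mat t ms) = t"
proof -
  interpret vec_space "TYPE(bit)" t .
  have M: "finite M" "M \<subseteq> carrier_vec t" using assms(1,6) by auto
  have zero_sum_free: "zero_sum_free_upto 4 t M"
    using assms(1-3) by (rule zero_sum_free_upto_4_if_sidon)
  have "unit_vec t i \<in> span M" if i: "i < t" for i
  proof (rule ccontr)
    assume "unit_vec t i \<notin> span M"
    have avoid: "vsum t Q \<notin> {0\<^sub>v t, unit_vec t i}" if Q: "Q \<subseteq> M" "Q \<noteq> {}" "card Q \<le> 4" for Q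
    proof -
      have "finite Q" using Q(1) M(1) finite_subset by blast
      then have "vsum t Q \<noteq> 0\<^sub>v t" "vsum t Q \<in> span M"
        using zero_sum_free_uptoD[OF zero_sum_free Q(1)] Q(2,3) vsum_in_span[OF Q(1) _ M(2)] by auto
      then show ?thesis using \<open>unit_vec t i \<notin> span M\<close> by auto
    qed
    have "card M + 1 \<le> s_max (t - 1)"
      by (rule card_le_s_max_pred_if_zero_sums_avoid[OF i _ _ M avoid]) (simp_all add: i)
    then show False using assms(4) by simp
  qed
  then have rank: "rank (col_mat t ms) = t"
    using col_mat_carrier cols_col_mat M(2) assms(6) by (intro rank_eq_if_unit_vecs_in_span) auto
  then have "kernel_dim (col_mat t ms) + t = card M"
    using kernel_dim_add_rank[OF col_mat_carrier] assms(5,6) distinct_card by metis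
  then show ?thesis using rank by simp
qed

lemma min_dist_col_mat_eq_5:
  assumes "M \<subseteq> carrier_vec t - {0\<^sub>v t}" and "sum_free M" and "sidon M"
    and "s_max (t - 1) + 1 \<le> card M" and "distinct ms" and "set ms = M"
  shows "min_dist (card M) (mat_kernel (col_mat t ms)) = 5"
proof -
  have "finite M" "M \<noteq> {}" using assms(4,6) by auto
  then have "\<not> zero_sum_free_upto 5 t M"
    using card_le_s_max_pred_if_zero_sum_free_5[OF _ assms(1)] assms(4) by fastforce
  then obtain T where T: "T \<subseteq> M" "finite T" "T \<noteq> {}" "card T \<le> 5" "vsum t T = 0\<^sub>v t"
    unfolding zero_sum_free_upto_def by blast
  have zero_sum_free: "zero_sum_free_upto 4 t M"
    using assms(1-3) by (rule zero_sum_free_upto_4_if_sidon)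
  have "\<not> card T \<le> 4"
    using zero_sum_free_uptoD[OF zero_sum_free T(1-3)] T(5) by blast
  then have "card T = 5" using T(4) by linarith
  then have "min_dist (length ms) (mat_kernel (col_mat t ms)) = 5"
    using min_dist_col_mat_eqI[of ms T t] zero_sum_free T assms(5,6) by auto
  then show ?thesis
    using assms(5,6) distinct_card by metis
qed

theorem theorem3p2:
  fixes t :: nat and M :: "bit vec set" and ms :: "bit vec list"
  assumes "t \<ge> 1"
    and "M \<subseteq> carrier_vec t - {0\<^sub>v t}"
    and "card M \<ge> t + 1"
    and "distinct ms" and "set ms = M"
  shows "(sum_free M \<and> card M \<ge> s_max t \<longrightarrow>
            min_dist (card M) (mat_kernel (col_mat t ms)) = 4 \<and> \<not> sidon M)
       \<and> (sum_free M \<and> sidon M \<and> card M \<ge> s_max (t - 1) \<longrightarrow>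
            kernel_dim (col_mat t ms) = card M - t \<and> vec_space.rank t (col_mat t ms) = t)
       \<and> (sum_free M \<and> sidon M \<and> card M \<ge> s_max (t - 1) + 1 \<longrightarrow>
            min_dist (card M) (mat_kernel (col_mat t ms)) = 5)"
proof -
  have "min_dist (card M) (mat_kernel (col_mat t ms)) = 4 \<and> \<not> sidon M"
    if "sum_free M" and "card M \<ge> s_max t"
    using min_dist_col_mat_eq_4[OF assms(2) that assms(4,5)] .
  moreover have "kernel_dim (col_mat t ms) = card M - t \<and> vec_space.rank t (col_mat t ms) = t"
    if "sum_free M" and "sidon M" and "card M \<ge> s_max (t - 1)"
    using rank_col_mat_if_sidon[OF assms(2) that assms(4,5)] .
  moreover have "min_dist (card M) (mat_kernel (col_mat t ms)) = 5"
    if "sum_free M" and "sidon M" and "card M \<ge> s_max (t - 1) + 1"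
    using min_dist_col_mat_eq_5[OF assms(2) that assms(4,5)] .
  ultimately show ?thesis by blast
qed

end
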